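(* Let $q$ be a prime power, let $\varepsilon = \frac{1}{9q}$, and let $G \in \mathbb{F}_q^{N\times n}$ be such that every nonzero vector of the form $Gx$, $x\in\mathbb{F}_q^n\setminus\{0\}$, has Hamming weight in $[d,(1+\varepsilon)d]$ for some integer $d\ge 1$. Let $Q_1,\dots,Q_m\in\mathbb{F}_q^{n\times n}$ and define $$V := \{GXG^T : X \in \mathbb{F}_q^{n\times n},\ X^T = X,\ Q_1(X) = 0,\dots,Q_m(X)=0\}\subseteq \mathbb{F}_q^{N\times N}.$$ Then: (i) if there is a nonzero $x \in \{0,1\}^n$ with $Q_\ell(xx^T)=0$ for all $\ell$, then $V$ contains a nonzero matrix $Y$ with $\|Y\|_0 \le (1+\frac{1}{3q})d^2$; (ii) if there is no nonzero $x \in \mathbb{F}_q^n$ with $Q_\ell(xx^T)=0$ for all $\ell$, then every nonzero $Y \in V$ satisfies $\|Y\|_0 \ge (1+\frac1q)d^2$.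
   Context: For $Q, X \in \mathbb{F}_q^{n\times n}$, $Q(X):=\sum_{i,j}Q[i,j]X[i,j]$. $\|Y\|_0$ is the number of nonzero entries of $Y$. *)

theory Defs
  imports "HOL-Analysis.Analysis"
begin

definition qeval :: "'a::semiring_1^'n::finite^'n \<Rightarrow> 'a^'n^'n \<Rightarrow> 'a" where
  "qeval Q X = (\<Sum>i\<in>UNIV. \<Sum>j\<in>UNIV. Q $ i $ j * X $ i $ j)"

definition hweight :: "'a::zero^'N::finite \<Rightarrow> nat" where
  "hweight v = card {i. v $ i \<noteq> 0}"

definition l0norm :: "'a::zero^'c::finite^'r::finite \<Rightarrow> nat" where
  "l0norm Y = card {(i, j). Y $ i $ j \<noteq> 0}"

definition outer :: "'a::times^'n \<Rightarrow> 'a^'n^'n" where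
  "outer x = (\<chi> i j. x $ i * x $ j)"

definition Vset :: "'a::comm_ring_1^'n::finite^'N::finite \<Rightarrow> (nat \<Rightarrow> 'a^'n^'n) \<Rightarrow> nat \<Rightarrow> ('a^'N^'N) set" where
  "Vset G Q m = {G ** X ** transpose G | X. transpose X = X \<and> (\<forall>l<m. qeval (Q l) X = 0)}"

end

theory Submission
  imports Defs
begin

text \<open>
  (i) For x with all Q_l(x x^T) = 0, the matrix G x x^T G^T = w w^T with w = G x lies in V and has
  exactly wt(w)^2 \<le> (1 + \<epsilon>)^2 d^2 \<le> (1 + 3\<epsilon>) d^2 nonzero entries.

  (ii) A nonzero symmetric X with all Q_l(X) = 0 cannot be a multiple of some x x^T, since x
  would then satisfy all constraints; so X has two linearly independent rows a, b. All
  q^2 - 1 nonzero combinations of G a and G b have weight at least d, and averaging over them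
  shows that the joint support S of G a and G b has at least (1 + 1/q) d elements. For p \<in> S
  the p-th column of G X G^T is G (X g_p), where g_p is the p-th row of G and X g_p \<noteq> 0, so it has weight at least d, and
  summing over S gives ||G X G^T||_0 \<ge> (1 + 1/q) d^2.
\<close>

lemma column_matrix_congruence:
  fixes A :: "'a::comm_semiring_1^'n::finite^'r::finite" and B :: "'a^'n^'c::finite"
  shows "column p (A ** X ** transpose B) = A *v (X *v (B $ p))"
proof -
  have "(A ** X ** transpose B) $ i $ p = (\<Sum>k\<in>UNIV. (\<Sum>j\<in>UNIV. A$i$j * X$j$k) * B$p$k)" for i
    by (simp add: matrix_matrix_mult_def transpose_def)
  also have "\<dots> i = (\<Sum>j\<in>UNIV. A$i$j * (\<Sum>k\<in>UNIV. X$j$k * B$p$k))" for i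
    unfolding sum_distrib_right sum_distrib_left mult.assoc by (rule sum.swap)
  finally show ?thesis
    by (simp add: vec_eq_iff column_def matrix_vector_mult_def)
qed

lemma l0norm_eq_sum_hweight_column:
  fixes Y :: "'a::zero^'c::finite^'r::finite"
  shows "l0norm Y = (\<Sum>p\<in>UNIV. hweight (column p Y))"
proof -
  have "{(i, p). Y $ i $ p \<noteq> 0} = (\<lambda>(p, i). (i, p)) ` (SIGMA p:UNIV. {i. Y $ i $ p \<noteq> 0})"
    by auto
  moreover have "inj_on (\<lambda>(p, i). (i, p)) (SIGMA p:(UNIV::'c set). {i. Y $ i $ p \<noteq> 0})"
    by (auto simp: inj_on_def)
  ultimately show ?thesis
    by (simp add: l0norm_def hweight_def column_def card_image card_SigmaI)
qed

lemma outer_transpose: "transpose (outer x) = outer (x::'a::comm_semiring_1^'n)"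
  by (simp add: vec_eq_iff outer_def transpose_def mult.commute)

lemma matrix_congruence_outer:
  fixes G :: "'a::comm_semiring_1^'n::finite^'N::finite"
  shows "G ** outer x ** transpose G = outer (G *v x)"
proof -
  have "column p (G ** outer x ** transpose G) $ i = (\<Sum>j\<in>UNIV. G$i$j * x$j * (\<Sum>k\<in>UNIV. G$p$k * x$k))" for i p
    by (simp add: column_matrix_congruence matrix_vector_mult_def outer_def sum_distrib_left mult_ac)
  then show ?thesis
    by (simp add: vec_eq_iff column_def outer_def matrix_vector_mult_def sum_distrib_right)
qed

lemma outer_eq_0_iff: "outer x = 0 \<longleftrightarrow> x = (0::'a::{semiring_no_zero_divisors}^'n)"
  by (auto simp: vec_eq_iff outer_def)

lemma l0norm_outer: "l0norm (outer x) = hweight (x::'a::{semiring_no_zero_divisors}^'n::finite)^2"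
proof -
  have "{(i, j). outer x $ i $ j \<noteq> 0} = {i. x $ i \<noteq> 0} \<times> {i. x $ i \<noteq> 0}"
    by (auto simp: outer_def)
  then show ?thesis
    by (simp add: l0norm_def hweight_def card_cartesian_product power2_eq_square)
qed

lemma card_kernel_linear_form:
  fixes \<alpha> \<beta> :: "'a::{field,finite}"
  assumes "(\<alpha>, \<beta>) \<noteq> (0, 0)"
  shows "card {(s, t). s * \<alpha> + t * \<beta> = 0} = CARD('a)"
proof (cases "\<alpha> = 0")
  case True
  then have "{(s, t). s * \<alpha> + t * \<beta> = 0} = range (\<lambda>s. (s, 0))"
    using assms by auto
  then show ?thesis
    by (simp add: card_image inj_on_def)
next
  case False
  then have "{(s, t). s * \<alpha> + t * \<beta> = 0} = range (\<lambda>t. (- t * \<beta> / \<alpha>, t))"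
    by (auto simp: field_simps add_eq_0_iff2 image_iff)
  then show ?thesis
    by (simp add: card_image inj_on_def)
qed

lemma card_nonkernel_linear_form:
  fixes \<alpha> \<beta> :: "'a::{field,finite}"
  assumes "(\<alpha>, \<beta>) \<noteq> (0, 0)"
  shows "card {(s, t). s * \<alpha> + t * \<beta> \<noteq> 0} = CARD('a)^2 - CARD('a)"
proof -
  have "{(s, t). s * \<alpha> + t * \<beta> \<noteq> 0} = UNIV - {(s, t). s * \<alpha> + t * \<beta> = 0}"
    by auto
  then show ?thesis
    using card_kernel_linear_form[OF assms] card_cartesian_product[of "UNIV::'a set" "UNIV::'a set"]
    by (simp add: card_Diff_subset power2_eq_square)
qed

lemma card_Collect_eq_sum_indicator:
  "card {x::'b::finite. P x} = (\<Sum>x\<in>UNIV. if P x then 1 else 0)"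
  by (simp add: sum.If_cases)

lemma sum_hweight_pencil:
  fixes u v :: "'a::{field,finite}^'N::finite"
  shows "(\<Sum>(s, t)\<in>UNIV. hweight (s *s u + t *s v))
           = (CARD('a)^2 - CARD('a)) * card {p. u $ p \<noteq> 0 \<or> v $ p \<noteq> 0}"
proof -
  have "(\<Sum>(s, t)\<in>UNIV. hweight (s *s u + t *s v))
          = (\<Sum>p\<in>UNIV. card {(s, t). s * u $ p + t * v $ p \<noteq> 0})"
    unfolding hweight_def card_Collect_eq_sum_indicator split_beta
    by (subst sum.swap) simp
  also have "\<dots> = (\<Sum>p\<in>UNIV. if u $ p \<noteq> 0 \<or> v $ p \<noteq> 0 then CARD('a)^2 - CARD('a) else 0)"
    by (rule sum.cong) (auto simp: card_nonkernel_linear_form)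
  finally show ?thesis
    by (simp add: sum.If_cases mult.commute)
qed

lemma pencil_support_bound:
  fixes u v :: "'a::{field,finite}^'N::finite"
  assumes "\<And>s t. (s, t) \<noteq> (0, 0) \<Longrightarrow> d \<le> hweight (s *s u + t *s v)"
  shows "(CARD('a) + 1) * d \<le> CARD('a) * card {p. u $ p \<noteq> 0 \<or> v $ p \<noteq> 0}"
proof -
  define q where "q = CARD('a)"
  have "2 \<le> q"
    using card_mono[of UNIV "{0, 1::'a}"] by (simp add: q_def)
  have "(q^2 - 1) * d = (\<Sum>z\<in>UNIV - {(0::'a, 0::'a)}. d)"
    using card_cartesian_product[of "UNIV::'a set" "UNIV::'a set"]
    by (simp add: q_def card_Diff_subset power2_eq_square)
  also have "\<dots> \<le> (\<Sum>(s, t)\<in>UNIV - {(0, 0)}. hweight (s *s u + t *s v))"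
    by (rule sum_mono) (use assms in auto)
  also have "\<dots> \<le> (\<Sum>(s, t)\<in>UNIV. hweight (s *s u + t *s v))"
    by (rule sum_mono2) auto
  finally have "(q - 1) * ((q + 1) * d) \<le> (q - 1) * (q * card {p. u $ p \<noteq> 0 \<or> v $ p \<noteq> 0})"
    using \<open>2 \<le> q\<close> by (simp add: sum_hweight_pencil q_def power2_eq_square algebra_simps)
  then show ?thesis
    using \<open>2 \<le> q\<close> by (simp add: q_def)
qed

lemma qeval_scale:
  fixes Q :: "'a::comm_semiring_1^'n::finite^'n"
  shows "qeval Q (\<chi> i j. c * X $ i $ j) = c * qeval Q X"
  unfolding qeval_def by (simp add: sum_distrib_left mult.left_commute)

lemma lincomb_nonzero_if_not_multiple:
  fixes a b :: "'a::field^'n"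
  assumes "a \<noteq> 0" "\<nexists>c. b = c *s a" "(s, t) \<noteq> (0, 0)"
  shows "s *s a + t *s b \<noteq> 0"
proof
  assume eq: "s *s a + t *s b = 0"
  show False
  proof (cases "t = 0")
    case True
    with eq assms show False
      by (auto simp: vec_eq_iff)
  next
    case False
    have "b $ i = (- s / t) * a $ i" for i
      using arg_cong[OF eq, of "\<lambda>w. w $ i"] False by (simp add: field_simps add_eq_0_iff2)
    then have "b = (- s / t) *s a"
      by (simp add: vec_eq_iff)
    with assms(2) show False
      by blast
  qed
qed

lemma symmetric_rank_one_or_independent_rows:
  fixes X :: "'a::field^'n::finite^'n"
  assumes sym: "transpose X = X" and "X \<noteq> 0"
  obtains x c where "x \<noteq> 0" "outer x = (\<chi> i k. c * X $ i $ k)"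
  | j k where "\<And>s t. (s, t) \<noteq> (0, 0) \<Longrightarrow> s *s X $ j + t *s X $ k \<noteq> 0"
proof -
  obtain j where "X $ j \<noteq> 0"
    using \<open>X \<noteq> 0\<close> by (auto simp: vec_eq_iff)
  show thesis
  proof (cases "\<forall>k. \<exists>c. X $ k = c *s X $ j")
    case True
    then obtain c where c: "\<And>k. X $ k = c k *s X $ j"
      by metis
    have X_ik: "X $ i $ k = c i * X $ j $ k" for i k
      using c[of i] by simp
    have X_ji: "X $ j $ i = c i * X $ j $ j" for i
      using X_ik[of i j] arg_cong[OF sym, of "\<lambda>M. M $ j $ i"] by (simp add: transpose_def)
    have "X $ j $ i * X $ j $ k = X $ j $ j * X $ i $ k" for i k
      using X_ji[of i] X_ik[of i k] by (simp add: mult_ac)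
    then have "outer (X $ j) = (\<chi> i k. X $ j $ j * X $ i $ k)"
      by (simp add: vec_eq_iff outer_def)
    then show thesis
      using that(1) \<open>X $ j \<noteq> 0\<close> by blast
  next
    case False
    then obtain k where "\<nexists>c. X $ k = c *s X $ j"
      by blast
    then show thesis
      using that(2)[of j k] lincomb_nonzero_if_not_multiple \<open>X $ j \<noteq> 0\<close> by blast
  qed
qed

lemma l0norm_congruence_lower_bound:
  fixes G :: "'a::{field,finite}^'n::finite^'N::finite" and X :: "'a^'n^'n"
  assumes weight: "\<And>x. x \<noteq> 0 \<Longrightarrow> d \<le> hweight (G *v x)"
    and indep: "\<And>s t. (s, t) \<noteq> (0, 0) \<Longrightarrow> s *s X $ j + t *s X $ k \<noteq> 0"
  shows "(CARD('a) + 1) * d^2 \<le> CARD('a) * l0norm (G ** X ** transpose G)"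
proof -
  define S where "S = {p. (G *v X $ j) $ p \<noteq> 0 \<or> (G *v X $ k) $ p \<noteq> 0}"
  have support: "(CARD('a) + 1) * d \<le> CARD('a) * card S"
    unfolding S_def
  proof (rule pencil_support_bound)
    fix s t :: 'a
    assume "(s, t) \<noteq> (0, 0)"
    then have "d \<le> hweight (G *v (s *s X $ j + t *s X $ k))"
      using weight indep by blast
    then show "d \<le> hweight (s *s (G *v X $ j) + t *s (G *v X $ k))"
      by (simp add: matrix_vector_right_distrib vector_scalar_commute)
  qed
  have columns: "d * card S \<le> l0norm (G ** X ** transpose G)"
  proof -
    have row_col: "(G *v X $ i) $ p = (X *v G $ p) $ i" for i p
      by (simp add: matrix_vector_mult_def mult.commute)
    have "(if p \<in> S then d else 0) \<le> hweight (column p (G ** X ** transpose G))" for p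
    proof (cases "p \<in> S")
      case True
      then have "X *v G $ p \<noteq> 0"
        by (auto simp: S_def row_col)
      then show ?thesis
        using True weight by (simp add: column_matrix_congruence)
    qed simp
    then have "(\<Sum>p\<in>UNIV. if p \<in> S then d else 0) \<le> l0norm (G ** X ** transpose G)"
      unfolding l0norm_eq_sum_hweight_column by (rule sum_mono)
    then show ?thesis
      by (simp add: sum.If_cases mult.commute)
  qed
  have "(CARD('a) + 1) * d^2 = d * ((CARD('a) + 1) * d)"
    by (simp add: power2_eq_square algebra_simps)
  also have "\<dots> \<le> d * (CARD('a) * card S)"
    using support by (rule mult_left_mono) simp
  also have "\<dots> = CARD('a) * (d * card S)"
    by simp
  also have "\<dots> \<le> CARD('a) * l0norm (G ** X ** transpose G)"
    using columns by simp
  finally show ?thesis .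
qed

lemma square_le_of_le_one_plus:
  fixes a b e :: real
  assumes "0 \<le> e" "e \<le> 1" "0 \<le> a" "a \<le> (1 + e) * b"
  shows "a^2 \<le> (1 + 3 * e) * b^2"
proof -
  have "a^2 \<le> ((1 + e) * b)^2"
    using assms by (intro power_mono) auto
  also have "\<dots> = (1 + 2 * e + e * e) * b^2"
    by (simp add: power2_eq_square algebra_simps)
  also have "\<dots> \<le> (1 + 3 * e) * b^2"
    using assms by (intro mult_right_mono) (auto simp: mult_left_le)
  finally show ?thesis .
qed

lemma outer_mem_Vset:
  fixes G :: "'a::comm_ring_1^'n::finite^'N::finite"
  assumes "\<forall>l<m. qeval (Q l) (outer x) = 0"
  shows "outer (G *v x) \<in> Vset G Q m"
proof -
  have "outer (G *v x) = G ** outer x ** transpose G"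
    by (rule matrix_congruence_outer[symmetric])
  with assms outer_transpose show ?thesis
    unfolding Vset_def by blast
qed

lemma Vset_sparse_member:
  fixes G :: "'a::field^'n::finite^'N::finite"
  assumes "\<forall>l<m. qeval (Q l) (outer x) = 0" "G *v x \<noteq> 0"
    and "real (hweight (G *v x)) \<le> (1 + e) * real d" "0 \<le> e" "e \<le> 1"
  shows "\<exists>Y\<in>Vset G Q m. Y \<noteq> 0 \<and> real (l0norm Y) \<le> (1 + 3 * e) * (real d)^2"
proof (intro bexI conjI)
  show "outer (G *v x) \<in> Vset G Q m" "outer (G *v x) \<noteq> 0"
    using assms outer_mem_Vset outer_eq_0_iff by blast+
  show "real (l0norm (outer (G *v x))) \<le> (1 + 3 * e) * (real d)^2"
    unfolding l0norm_outer of_nat_power using assms by (intro square_le_of_le_one_plus) auto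
qed

lemma Vset_l0norm_lower_bound:
  fixes G :: "'a::{field,finite}^'n::finite^'N::finite"
  assumes weight: "\<And>x. x \<noteq> 0 \<Longrightarrow> d \<le> hweight (G *v x)"
    and anisotropic: "\<And>x. x \<noteq> 0 \<Longrightarrow> \<exists>l<m. qeval (Q l) (outer x) \<noteq> 0"
    and "Y \<in> Vset G Q m" "Y \<noteq> 0"
  shows "(CARD('a) + 1) * d^2 \<le> CARD('a) * l0norm Y"
proof -
  obtain X where Y: "Y = G ** X ** transpose G" and "transpose X = X"
    and X_zero: "\<forall>l<m. qeval (Q l) X = 0"
    using \<open>Y \<in> Vset G Q m\<close> unfolding Vset_def by blast
  have "X \<noteq> 0"
    using \<open>Y \<noteq> 0\<close> unfolding Y by auto
  show ?thesis
  proof (rule symmetric_rank_one_or_independent_rows[OF \<open>transpose X = X\<close> \<open>X \<noteq> 0\<close>])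
    fix x c
    assume "x \<noteq> 0" "outer x = (\<chi> i k. c * X $ i $ k)"
    then have "\<forall>l<m. qeval (Q l) (outer x) = 0"
      using X_zero by (simp add: qeval_scale)
    with anisotropic \<open>x \<noteq> 0\<close> show ?thesis
      by blast
  next
    fix j k
    assume "\<And>s t. (s, t) \<noteq> (0, 0) \<Longrightarrow> s *s X $ j + t *s X $ k \<noteq> 0"
    with weight show ?thesis
      unfolding Y by (rule l0norm_congruence_lower_bound)
  qed
qed

theorem mainTheorem8:
  fixes G :: "'a::{field,finite}^'n::finite^'N::finite"
    and Q :: "nat \<Rightarrow> 'a^'n^'n"
    and m :: nat and d :: nat
  assumes d_pos: "d \<ge> 1"
    and code: "\<And>x. x \<noteq> 0 \<Longrightarrow> G *v x \<noteq> 0 \<and> real d \<le> real (hweight (G *v x))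
                 \<and> real (hweight (G *v x)) \<le> (1 + 1 / (9 * real CARD('a))) * real d"
  shows "((\<exists>x::'a^'n. x \<noteq> 0 \<and> (\<forall>i. x $ i \<in> {0, 1}) \<and> (\<forall>l<m. qeval (Q l) (outer x) = 0))
            \<longrightarrow> (\<exists>Y\<in>Vset G Q m. Y \<noteq> 0 \<and>
                   real (l0norm Y) \<le> (1 + 1 / (3 * real CARD('a))) * (real d)\<^sup>2))
       \<and> ((\<not> (\<exists>x::'a^'n. x \<noteq> 0 \<and> (\<forall>l<m. qeval (Q l) (outer x) = 0)))
            \<longrightarrow> (\<forall>Y\<in>Vset G Q m. Y \<noteq> 0 \<longrightarrow>
                   real (l0norm Y) \<ge> (1 + 1 / real CARD('a)) * (real d)\<^sup>2))"
proof (intro conjI impI ballI)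
  assume "\<exists>x::'a^'n. x \<noteq> 0 \<and> (\<forall>i. x $ i \<in> {0, 1}) \<and> (\<forall>l<m. qeval (Q l) (outer x) = 0)"
  then obtain x :: "'a^'n" where "x \<noteq> 0" and isotropic: "\<forall>l<m. qeval (Q l) (outer x) = 0"
    by blast
  have "1 \<le> real CARD('a)"
    by (simp add: Suc_le_eq)
  then have "1 \<le> 9 * real CARD('a)"
    by linarith
  then have "1 / (9 * real CARD('a)) \<le> 1"
    by simp
  from Vset_sparse_member[OF isotropic _ _ _ this] code[OF \<open>x \<noteq> 0\<close>]
  show "\<exists>Y\<in>Vset G Q m. Y \<noteq> 0 \<and> real (l0norm Y) \<le> (1 + 1 / (3 * real CARD('a))) * (real d)\<^sup>2"
    by auto
next
  assume no_isotropic: "\<not> (\<exists>x::'a^'n. x \<noteq> 0 \<and> (\<forall>l<m. qeval (Q l) (outer x) = 0))"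
  fix Y
  assume "Y \<in> Vset G Q m" "Y \<noteq> 0"
  have weight: "d \<le> hweight (G *v x)" if "x \<noteq> 0" for x
    using code[OF that] by simp
  have anisotropic: "\<exists>l<m. qeval (Q l) (outer x) \<noteq> 0" if "x \<noteq> 0" for x
    using no_isotropic that by blast
  have "(CARD('a) + 1) * d^2 \<le> CARD('a) * l0norm Y"
    by (rule Vset_l0norm_lower_bound[OF weight anisotropic \<open>Y \<in> Vset G Q m\<close> \<open>Y \<noteq> 0\<close>])
  then have "real ((CARD('a) + 1) * d^2) \<le> real (CARD('a) * l0norm Y)"
    by (simp only: of_nat_le_iff)
  then show "real (l0norm Y) \<ge> (1 + 1 / real CARD('a)) * (real d)\<^sup>2"
    by (simp add: field_simps)
qed

end
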